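(* Let $V$ be a complex vector space with inner products $\langle\cdot,\cdot\rangle_1,\langle\cdot,\cdot\rangle_2$ and induced norms $\|\cdot\|_1,\|\cdot\|_2$. The following are equivalent: (1) there is $c>0$ with $\langle\cdot,\cdot\rangle_2=c\langle\cdot,\cdot\rangle_1$; (2) there is $c>0$ with $\|\cdot\|_2=c\|\cdot\|_1$; (3) for all nonzero $x,y\in V$, the angle between $x$ and $y$ with respect to $\langle\cdot,\cdot\rangle_1$ equals that with respect to $\langle\cdot,\cdot\rangle_2$; (4) for all nonzero $x,y\in V$, the angle between $x,y$ with respect to $\langle\cdot,\cdot\rangle_1$ is $\pi/2$ iff it is $\pi/2$ with respect to $\langle\cdot,\cdot\rangle_2$ (i.e. $\mathrm{Re}\langle x,y\rangle_1=0\iff\mathrm{Re}\langle x,y\rangle_2=0$); (5) for all $x,y\in V$, $\langle x,y\rangle_1=0$ iff $\langle x,y\rangle_2=0$; (6) there exists $\theta_0\in(0,\pi)$ such that for all nonzero $x,y\in V$, the angle between $x$ and $y$ with respect to $\langle\cdot,\cdot\rangle_1$ is $\theta_0$ iff the angle between them with respect to $\langle\cdot,\cdot\rangle_2$ is $\theta_0$.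
   Context: Inner products are linear in the first argument and conjugate-linear in the second, with norm $\|x\|=\sqrt{\langle x,x\rangle}$. The (Euclidean) angle between nonzero vectors $x,y$ of a complex inner product space is the unique $\theta\in[0,\pi]$ with $\cos\theta=\mathrm{Re}\,\langle x,y\rangle/(\|x\|\|y\|)$. *)

theory Defs
  imports Complex_Main
begin

text \<open>A complex vector space is given by an additive group type 'v together with a
  scalar multiplication sc satisfying the axioms of the locale vector_space.\<close>

definition is_inner_product :: "(complex \<Rightarrow> 'v::ab_group_add \<Rightarrow> 'v) \<Rightarrow> ('v \<Rightarrow> 'v \<Rightarrow> complex) \<Rightarrow> bool" where
  "is_inner_product sc ip \<longleftrightarrow>
     (\<forall>x y z. ip (x + y) z = ip x z + ip y z) \<and>
     (\<forall>a x y. ip (sc a x) y = a * ip x y) \<and>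
     (\<forall>x y. ip y x = cnj (ip x y)) \<and>
     (\<forall>x. Im (ip x x) = 0 \<and> Re (ip x x) \<ge> 0) \<and>
     (\<forall>x. ip x x = 0 \<longrightarrow> x = 0)"

definition ip_norm :: "('v \<Rightarrow> 'v \<Rightarrow> complex) \<Rightarrow> 'v \<Rightarrow> real" where
  "ip_norm ip x = sqrt (Re (ip x x))"

definition ip_angle :: "('v \<Rightarrow> 'v \<Rightarrow> complex) \<Rightarrow> 'v \<Rightarrow> 'v \<Rightarrow> real" where
  "ip_angle ip x y = arccos (Re (ip x y) / (ip_norm ip x * ip_norm ip y))"

end

theory Submission
  imports Defs
begin

text \<open>Everything reduces to preservation of real orthogonality. If \<open>Re <x,y>\<^sub>1 = 0\<close> forces
  \<open>Re <x,y>\<^sub>2 = 0\<close>, projecting \<open>y\<close> onto \<open>x\<close> gives \<open>Re <y,x>\<^sub>2 = g x * Re <y,x>\<^sub>1\<close> with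
  \<open>g x = |x|\<^sub>2\<^sup>2 / |x|\<^sub>1\<^sup>2\<close>; comparing \<open><x,z>\<close> with \<open><z,x>\<close> shows that \<open>g\<close> is constant,
  and \<open>Im <x,y> = Re <x, i y>\<close> carries the proportionality over to the imaginary parts. Preservation of complex orthogonality gives
  real orthogonality through a complex projection. Preservation of a single angle
  \<open>\<theta> \<in> (0, pi)\<close> does too: if \<open>Re <x,y>\<^sub>1 = 0\<close>, both vectors
  \<open>cos \<theta> |y|\<^sub>1 x \<plusminus> sin \<theta> |x|\<^sub>1 y\<close> make the angle \<open>\<theta>\<close> with \<open>x\<close>, and the two resulting
  equations for the second inner product force \<open>Re <x,y>\<^sub>2 = 0\<close>.\<close>

locale complex_inner_product =
  fixes sc :: "complex \<Rightarrow> 'v::ab_group_add \<Rightarrow> 'v" and ip :: "'v \<Rightarrow> 'v \<Rightarrow> complex"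
  assumes is_inner_product: "is_inner_product sc ip"
begin

lemma ip_add_left: "ip (x + y) z = ip x z + ip y z"
  using is_inner_product unfolding is_inner_product_def by blast

lemma ip_scale_left: "ip (sc a x) y = a * ip x y"
  using is_inner_product unfolding is_inner_product_def by blast

lemma ip_swap: "ip y x = cnj (ip x y)"
  using is_inner_product unfolding is_inner_product_def by blast

lemma Im_ip_self: "Im (ip x x) = 0"
  using is_inner_product unfolding is_inner_product_def by blast

lemma Re_ip_self_nonneg: "Re (ip x x) \<ge> 0"
  using is_inner_product unfolding is_inner_product_def by blast

lemma ip_self_eq_0_imp: "ip x x = 0 \<Longrightarrow> x = 0"
  using is_inner_product unfolding is_inner_product_def by blast

lemma ip_zero_left [simp]: "ip 0 y = 0"
  using ip_add_left[of 0 0 y] by simp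

lemma ip_zero_right [simp]: "ip y 0 = 0"
  using ip_swap[of 0 y] by simp

lemma ip_minus_left: "ip (- x) y = - ip x y"
  using ip_add_left[of x "- x" y] by (simp add: add_eq_0_iff)

lemma ip_diff_left: "ip (x - y) z = ip x z - ip y z"
  using ip_add_left[of x "- y" z] ip_minus_left[of y z] by simp

lemma ip_add_right: "ip x (y + z) = ip x y + ip x z"
  by (metis ip_swap ip_add_left complex_cnj_add)

lemma ip_scale_right: "ip x (sc a y) = cnj a * ip x y"
  by (metis ip_swap ip_scale_left complex_cnj_mult)

lemma Re_ip_swap: "Re (ip y x) = Re (ip x y)"
  using ip_swap[of x y] by simp

lemma ip_self_real: "ip x x = of_real (Re (ip x x))"
  using Im_ip_self[of x] by (simp add: complex_eq_iff)

lemma Re_ip_self_pos: "x \<noteq> 0 \<Longrightarrow> Re (ip x x) > 0"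
  using ip_self_eq_0_imp[of x] ip_self_real[of x] Re_ip_self_nonneg[of x]
  by (metis less_eq_real_def of_real_0)

lemma Im_ip_eq_Re_ip_scale_ii: "Im (ip x y) = Re (ip x (sc \<i> y))"
  by (simp add: ip_scale_right)

lemma Re_ip_self_add: "Re (ip (x + y) (x + y)) = Re (ip x x) + 2 * Re (ip x y) + Re (ip y y)"
  using Re_ip_swap[of x y] by (simp add: ip_add_left ip_add_right)

lemma Re_ip_self_lincomb:
  "Re (ip (sc (of_real a) x + sc (of_real b) y) (sc (of_real a) x + sc (of_real b) y))
   = a\<^sup>2 * Re (ip x x) + 2 * a * b * Re (ip x y) + b\<^sup>2 * Re (ip y y)"
  by (simp add: Re_ip_self_add ip_scale_left ip_scale_right power2_eq_square)

lemma ip_norm_sq: "(ip_norm ip x)\<^sup>2 = Re (ip x x)"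
  unfolding ip_norm_def using Re_ip_self_nonneg[of x] by simp

lemma ip_norm_pos: "x \<noteq> 0 \<Longrightarrow> ip_norm ip x > 0"
  unfolding ip_norm_def using Re_ip_self_pos[of x] by simp

lemma ip_norm_zero [simp]: "ip_norm ip 0 = 0"
  by (simp add: ip_norm_def)

lemma ip_norm_nonneg: "ip_norm ip x \<ge> 0"
  by (simp add: ip_norm_def Re_ip_self_nonneg)

lemma Re_ip_sq_le: "(Re (ip x y))\<^sup>2 \<le> Re (ip x x) * Re (ip y y)"
proof (cases "x = 0")
  case False
  have "0 \<le> Re (ip (sc (of_real (- Re (ip x y))) x + sc (of_real (Re (ip x x))) y)
                 (sc (of_real (- Re (ip x y))) x + sc (of_real (Re (ip x x))) y))"
    by (rule Re_ip_self_nonneg)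
  also have "\<dots> = Re (ip x x) * (Re (ip x x) * Re (ip y y) - (Re (ip x y))\<^sup>2)"
    by (simp only: Re_ip_self_lincomb) (simp add: power2_eq_square algebra_simps)
  finally show ?thesis
    using Re_ip_self_pos[OF False] by (simp add: zero_le_mult_iff)
qed simp

lemma abs_Re_ip_le: "\<bar>Re (ip x y)\<bar> \<le> ip_norm ip x * ip_norm ip y"
proof -
  have "\<bar>Re (ip x y)\<bar> = sqrt ((Re (ip x y))\<^sup>2)" by simp
  also have "\<dots> \<le> sqrt (Re (ip x x) * Re (ip y y))" by (rule real_sqrt_le_mono[OF Re_ip_sq_le])
  also have "\<dots> = ip_norm ip x * ip_norm ip y" by (simp add: ip_norm_def real_sqrt_mult)
  finally show ?thesis .
qed

lemma cos_ip_angle: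
  assumes "x \<noteq> 0" "y \<noteq> 0"
  shows "cos (ip_angle ip x y) = Re (ip x y) / (ip_norm ip x * ip_norm ip y)"
proof -
  have pos: "ip_norm ip x * ip_norm ip y > 0" using assms ip_norm_pos by simp
  then have "\<bar>Re (ip x y) / (ip_norm ip x * ip_norm ip y)\<bar> \<le> 1"
    using abs_Re_ip_le[of x y] by (simp add: abs_divide divide_le_eq)
  then show ?thesis unfolding ip_angle_def by (rule cos_arccos_abs)
qed

lemma Re_ip_sq_if_ip_angle_eq:
  assumes "x \<noteq> 0" "y \<noteq> 0" "ip_angle ip x y = \<theta>"
  shows "(Re (ip x y))\<^sup>2 = (cos \<theta>)\<^sup>2 * Re (ip x x) * Re (ip y y)"
proof -
  have "ip_norm ip x * ip_norm ip y \<noteq> 0" using assms ip_norm_pos by (metis mult_pos_pos less_irrefl)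
  then have "Re (ip x y) = cos \<theta> * (ip_norm ip x * ip_norm ip y)"
    using cos_ip_angle[OF assms(1,2)] assms(3) by simp
  then show ?thesis by (simp add: power_mult_distrib ip_norm_sq)
qed

lemma ip_norm_orthogonal_lincomb:
  assumes "Re (ip x y) = 0" "\<alpha>\<^sup>2 + e\<^sup>2 = 1"
  shows "ip_norm ip (sc (of_real (\<alpha> * ip_norm ip y)) x + sc (of_real (e * ip_norm ip x)) y)
           = ip_norm ip x * ip_norm ip y" (is "ip_norm ip ?z = ?p * ?q")
proof -
  have "Re (ip ?z ?z) = (\<alpha> * ?q)\<^sup>2 * ?p\<^sup>2 + (e * ?p)\<^sup>2 * ?q\<^sup>2"
    using Re_ip_self_lincomb[of "\<alpha> * ?q" x "e * ?p" y] by (simp add: assms(1) ip_norm_sq)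
  also have "\<dots> = (?p * ?q)\<^sup>2 * (\<alpha>\<^sup>2 + e\<^sup>2)"
    by (simp add: power_mult_distrib algebra_simps)
  finally have "(ip_norm ip ?z)\<^sup>2 = (?p * ?q)\<^sup>2"
    using assms(2) by (simp add: ip_norm_sq)
  then show ?thesis
    using ip_norm_nonneg by (simp add: power2_eq_iff_nonneg)
qed

lemma ip_angle_orthogonal_lincomb:
  assumes "x \<noteq> 0" "y \<noteq> 0" "Re (ip x y) = 0" "\<alpha>\<^sup>2 + e\<^sup>2 = 1"
  shows "ip_angle ip x (sc (of_real (\<alpha> * ip_norm ip y)) x + sc (of_real (e * ip_norm ip x)) y)
           = arccos \<alpha>" (is "ip_angle ip x ?z = _")
proof -
  let ?p = "ip_norm ip x" and ?q = "ip_norm ip y"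
  have "Re (ip x ?z) = \<alpha> * ?q * ?p\<^sup>2"
    by (simp add: ip_add_right ip_scale_right assms(3) flip: ip_norm_sq)
  moreover have "?p > 0" "?q > 0"
    using assms(1,2) ip_norm_pos by auto
  ultimately show ?thesis
    unfolding ip_angle_def ip_norm_orthogonal_lincomb[OF assms(3,4)]
    by (simp add: power2_eq_square)
qed

end

lemma ip_norm_eq_scaled_if_ip_eq_scaled:
  assumes "c \<ge> 0" "\<And>x y. ip2 x y = of_real c * ip1 x y"
  shows "ip_norm ip2 x = sqrt c * ip_norm ip1 x"
  using assms by (simp add: ip_norm_def real_sqrt_mult)

lemma ip_angle_eq_if_ip_eq_scaled:
  assumes "c > 0" "\<And>x y. ip2 x y = of_real c * ip1 x y"
  shows "ip_angle ip2 x y = ip_angle ip1 x y"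
proof -
  have "ip_norm ip2 x * ip_norm ip2 y = (sqrt c * sqrt c) * (ip_norm ip1 x * ip_norm ip1 y)"
    using assms ip_norm_eq_scaled_if_ip_eq_scaled[of c ip2 ip1] by (simp add: ac_simps)
  then have "ip_norm ip2 x * ip_norm ip2 y = c * (ip_norm ip1 x * ip_norm ip1 y)"
    using assms(1) by simp
  then show ?thesis
    using assms by (simp add: ip_angle_def)
qed

locale two_complex_inner_products =
  ip1: complex_inner_product sc ip1 + ip2: complex_inner_product sc ip2
  for sc :: "complex \<Rightarrow> 'v::ab_group_add \<Rightarrow> 'v" and ip1 ip2 :: "'v \<Rightarrow> 'v \<Rightarrow> complex"
begin

lemma ip_eq_scaled_if_Re_ip_eq_scaled:
  assumes "\<And>x y. Re (ip2 x y) = c * Re (ip1 x y)"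
  shows "ip2 x y = of_real c * ip1 x y"
  using assms[of x y] assms[of x "sc \<i> y"]
  by (simp add: complex_eq_iff ip1.Im_ip_eq_Re_ip_scale_ii ip2.Im_ip_eq_Re_ip_scale_ii)

lemma ip_eq_scaled_if_ip_norm_eq_scaled:
  assumes "\<And>x. ip_norm ip2 x = c * ip_norm ip1 x"
  shows "ip2 x y = of_real (c\<^sup>2) * ip1 x y"
proof (rule ip_eq_scaled_if_Re_ip_eq_scaled)
  have sq: "Re (ip2 z z) = c\<^sup>2 * Re (ip1 z z)" for z
    using assms[of z] by (simp add: power_mult_distrib flip: ip1.ip_norm_sq ip2.ip_norm_sq)
  show "Re (ip2 x y) = c\<^sup>2 * Re (ip1 x y)" for x y
    using ip1.Re_ip_self_add[of x y] ip2.Re_ip_self_add[of x y] sq[of x] sq[of y] sq[of "x + y"]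
    by (simp add: algebra_simps)
qed

lemma Re_ip2_eq_0_if_ip_orthogonality_preserved:
  assumes orth: "\<And>x y. ip1 x y = 0 \<Longrightarrow> ip2 x y = 0" and "Re (ip1 x y) = 0"
  shows "Re (ip2 x y) = 0"
proof (cases "y = 0")
  case False
  define a where "a = ip1 x y / ip1 y y"
  have ip1_yy: "ip1 y y \<noteq> 0"
    using ip1.Re_ip_self_pos[OF False] by auto
  then have "ip1 (x - sc a y) y = 0"
    by (simp add: a_def ip1.ip_diff_left ip1.ip_scale_left)
  then have "ip2 (x - sc a y) y = 0"
    by (rule orth)
  then have "ip2 x y = ip1 x y * (ip2 y y / ip1 y y)"
    by (simp add: a_def ip2.ip_diff_left ip2.ip_scale_left)
  moreover obtain r1 r2 where "ip1 y y = of_real r1" "ip2 y y = of_real r2"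
    using ip1.ip_self_real ip2.ip_self_real by blast
  ultimately show ?thesis
    using assms(2) by simp
qed simp

lemma Re_ip2_eq_0_if_angle_preserved:
  assumes \<theta>: "0 < \<theta>" "\<theta> < pi"
    and angle: "\<And>x y. x \<noteq> 0 \<Longrightarrow> y \<noteq> 0 \<Longrightarrow> ip_angle ip1 x y = \<theta> \<Longrightarrow> ip_angle ip2 x y = \<theta>"
    and orth: "Re (ip1 x y) = 0"
  shows "Re (ip2 x y) = 0"
proof (cases "x = 0 \<or> y = 0")
  case False
  then have x: "x \<noteq> 0" and y: "y \<noteq> 0" by auto
  define p q where "p = ip_norm ip1 x" and "q = ip_norm ip1 y"
  define a b d where "a = Re (ip2 x x)" and "b = Re (ip2 x y)" and "d = Re (ip2 y y)"
  define \<alpha> s where "\<alpha> = cos \<theta>" and "s = sin \<theta>"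
  have p: "p > 0" and q: "q > 0" and a: "a > 0"
    using x y ip1.ip_norm_pos ip2.Re_ip_self_pos by (auto simp: p_def q_def a_def)
  have s: "s > 0"
    using \<theta> sin_gt_zero by (simp add: s_def)
  have \<alpha>s: "\<alpha>\<^sup>2 + s\<^sup>2 = 1"
    by (simp add: \<alpha>_def s_def)
  have sq: "(\<alpha> * q * a + e * p * b)\<^sup>2 = \<alpha>\<^sup>2 * a * (\<alpha>\<^sup>2 * q\<^sup>2 * a + 2 * \<alpha> * q * e * p * b + e\<^sup>2 * p\<^sup>2 * d)"
    if e: "e\<^sup>2 = s\<^sup>2" for e
  proof -
    define z where "z = sc (of_real (\<alpha> * q)) x + sc (of_real (e * p)) y"
    have \<alpha>e: "\<alpha>\<^sup>2 + e\<^sup>2 = 1"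
      using \<alpha>s e by simp
    have "ip_norm ip1 z = p * q"
      unfolding z_def p_def q_def by (rule ip1.ip_norm_orthogonal_lincomb[OF orth \<alpha>e])
    then have z: "z \<noteq> 0"
      using p q by auto
    have "ip_angle ip1 x z = arccos \<alpha>"
      unfolding z_def p_def q_def by (rule ip1.ip_angle_orthogonal_lincomb[OF x y orth \<alpha>e])
    also have "\<dots> = \<theta>"
      using \<theta> by (simp add: \<alpha>_def arccos_cos)
    finally have "ip_angle ip2 x z = \<theta>"
      by (rule angle[OF x z])
    then have "(Re (ip2 x z))\<^sup>2 = \<alpha>\<^sup>2 * a * Re (ip2 z z)"
      unfolding \<alpha>_def a_def by (rule ip2.Re_ip_sq_if_ip_angle_eq[OF x z])
    moreover have "Re (ip2 x z) = \<alpha> * q * a + e * p * b"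
      by (simp add: z_def a_def b_def ip2.ip_add_right ip2.ip_scale_right)
    moreover have "Re (ip2 z z) = \<alpha>\<^sup>2 * q\<^sup>2 * a + 2 * \<alpha> * q * e * p * b + e\<^sup>2 * p\<^sup>2 * d"
      unfolding z_def ip2.Re_ip_self_lincomb a_def b_def d_def by (simp add: power_mult_distrib)
    ultimately show ?thesis
      by simp
  qed
  \<comment> \<open>subtracting the two instances leaves \<open>4 q a s p b \<alpha> (1 - \<alpha>\<^sup>2) = 0\<close>\<close>
  have "(4 * q * a * s * p * s\<^sup>2) * (\<alpha> * b) = 0"
    using sq[of s] sq[of "- s"] \<alpha>s by algebra
  then have "\<alpha> = 0 \<or> b = 0"
    using p q a s by simp
  moreover have "b = 0" if "\<alpha> = 0"
    using sq[of s] that p s by simp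
  ultimately show ?thesis
    unfolding b_def by blast
qed auto

end

locale Re_orthogonality_preserving = two_complex_inner_products sc ip1 ip2
  for sc :: "complex \<Rightarrow> 'v::ab_group_add \<Rightarrow> 'v" and ip1 ip2 :: "'v \<Rightarrow> 'v \<Rightarrow> complex" +
  assumes Re_orthogonality_preserved: "Re (ip1 x y) = 0 \<Longrightarrow> Re (ip2 x y) = 0"
begin

definition norm_sq_ratio :: "'v \<Rightarrow> real" where
  "norm_sq_ratio x = Re (ip2 x x) / Re (ip1 x x)"

lemma norm_sq_ratio_pos: "x \<noteq> 0 \<Longrightarrow> norm_sq_ratio x > 0"
  using ip1.Re_ip_self_pos ip2.Re_ip_self_pos by (simp add: norm_sq_ratio_def)

lemma Re_ip2_eq_norm_sq_ratio:
  assumes "x \<noteq> 0"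
  shows "Re (ip2 y x) = norm_sq_ratio x * Re (ip1 y x)"
proof -
  define t where "t = Re (ip1 y x) / Re (ip1 x x)"
  have pos: "Re (ip1 x x) > 0"
    using ip1.Re_ip_self_pos[OF assms] .
  then have "Re (ip1 (y - sc (of_real t) x) x) = 0"
    by (simp add: t_def ip1.ip_diff_left ip1.ip_scale_left)
  then have "Re (ip2 (y - sc (of_real t) x) x) = 0"
    by (rule Re_orthogonality_preserved)
  then have "Re (ip2 y x) = t * Re (ip2 x x)"
    by (simp add: ip2.ip_diff_left ip2.ip_scale_left)
  then show ?thesis
    using pos by (simp add: t_def norm_sq_ratio_def)
qed

lemma norm_sq_ratio_eq_if_Re_ip_nonzero:
  assumes "x \<noteq> 0" "z \<noteq> 0" "Re (ip1 z x) \<noteq> 0"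
  shows "norm_sq_ratio x = norm_sq_ratio z"
proof -
  have "norm_sq_ratio x * Re (ip1 z x) = norm_sq_ratio z * Re (ip1 z x)"
    using Re_ip2_eq_norm_sq_ratio[OF assms(1), of z] Re_ip2_eq_norm_sq_ratio[OF assms(2), of x]
    by (simp add: ip1.Re_ip_swap[of x z] ip2.Re_ip_swap[of x z])
  then show ?thesis
    using assms(3) by simp
qed

lemma norm_sq_ratio_eq:
  assumes x: "x \<noteq> 0" and z: "z \<noteq> 0"
  shows "norm_sq_ratio x = norm_sq_ratio z"
proof (cases "Re (ip1 z x) = 0")
  case True
  \<comment> \<open>pass through \<open>x + z\<close>, which is not orthogonal to either vector\<close>
  have "x + z \<noteq> 0"
  proof
    assume "x + z = 0"
    then have "z = - x"
      by (simp add: eq_neg_iff_add_eq_0 add.commute)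
    then show False
      using True ip1.Re_ip_self_pos[OF x] by (simp add: ip1.ip_minus_left)
  qed
  moreover have "Re (ip1 (x + z) x) = Re (ip1 x x)" "Re (ip1 (x + z) z) = Re (ip1 z z)"
    using True ip1.Re_ip_swap[of x z] by (simp_all add: ip1.ip_add_left)
  ultimately show ?thesis
    using norm_sq_ratio_eq_if_Re_ip_nonzero ip1.Re_ip_self_pos x z by (metis less_irrefl)
qed (rule norm_sq_ratio_eq_if_Re_ip_nonzero[OF x z])

lemma ip_proportional: "\<exists>c>0. \<forall>x y. ip2 x y = of_real c * ip1 x y"
proof (cases "\<exists>x0::'v. x0 \<noteq> 0")
  case True
  then obtain x0 :: 'v where x0: "x0 \<noteq> 0" ..
  have "Re (ip2 x y) = norm_sq_ratio x0 * Re (ip1 x y)" for x y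
    using Re_ip2_eq_norm_sq_ratio[of y x] norm_sq_ratio_eq[OF x0, of y]
    by (cases "y = 0") simp_all
  then show ?thesis
    using norm_sq_ratio_pos[OF x0] ip_eq_scaled_if_Re_ip_eq_scaled by blast
next
  case False
  then have "ip2 x y = of_real 1 * ip1 x y" for x y
    using ip1.ip_zero_left[of y] ip2.ip_zero_left[of y] by (metis mult_1 of_real_1)
  then show ?thesis
    using zero_less_one by blast
qed

end

lemma (in two_complex_inner_products) ip_proportional_if_Re_orthogonality_preserved:
  assumes "\<And>x y. Re (ip1 x y) = 0 \<Longrightarrow> Re (ip2 x y) = 0"
  shows "\<exists>c>0. \<forall>x y. ip2 x y = of_real c * ip1 x y"
proof -
  interpret Re_orthogonality_preserving sc ip1 ip2
    by unfold_locales (rule assms)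
  show ?thesis
    by (rule ip_proportional)
qed

theorem mainTheorem10:
  fixes sc :: "complex \<Rightarrow> 'v::ab_group_add \<Rightarrow> 'v"
    and ip1 ip2 :: "'v \<Rightarrow> 'v \<Rightarrow> complex"
  assumes "vector_space sc"
    and "is_inner_product sc ip1"
    and "is_inner_product sc ip2"
  defines "P1 \<equiv> (\<exists>c::real. c > 0 \<and> (\<forall>x y. ip2 x y = complex_of_real c * ip1 x y))"
    and "P2 \<equiv> (\<exists>c::real. c > 0 \<and> (\<forall>x. ip_norm ip2 x = c * ip_norm ip1 x))"
    and "P3 \<equiv> (\<forall>x y. x \<noteq> 0 \<longrightarrow> y \<noteq> 0 \<longrightarrow> ip_angle ip1 x y = ip_angle ip2 x y)"
    and "P4 \<equiv> (\<forall>x y. x \<noteq> 0 \<longrightarrow> y \<noteq> 0 \<longrightarrow>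
               (ip_angle ip1 x y = pi / 2 \<longleftrightarrow> ip_angle ip2 x y = pi / 2))"
    and "P5 \<equiv> (\<forall>x y. ip1 x y = 0 \<longleftrightarrow> ip2 x y = 0)"
    and "P6 \<equiv> (\<exists>\<theta>0. 0 < \<theta>0 \<and> \<theta>0 < pi \<and>
               (\<forall>x y. x \<noteq> 0 \<longrightarrow> y \<noteq> 0 \<longrightarrow>
                  (ip_angle ip1 x y = \<theta>0 \<longleftrightarrow> ip_angle ip2 x y = \<theta>0)))"
  shows "(P1 \<longleftrightarrow> P2) \<and> (P1 \<longleftrightarrow> P3) \<and> (P1 \<longleftrightarrow> P4) \<and> (P1 \<longleftrightarrow> P5) \<and> (P1 \<longleftrightarrow> P6)"
proof -
  interpret two_complex_inner_products sc ip1 ip2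
    using assms(2,3) by (simp add: two_complex_inner_products_def complex_inner_product_def)
  have P1_if_Re_orth: "P1" if "\<And>x y. Re (ip1 x y) = 0 \<Longrightarrow> Re (ip2 x y) = 0"
    using ip_proportional_if_Re_orthogonality_preserved[OF that] by (simp add: P1_def)
  have "P1 \<Longrightarrow> P2"
    unfolding P1_def P2_def
    by (metis ip_norm_eq_scaled_if_ip_eq_scaled less_imp_le real_sqrt_gt_zero)
  moreover have "P2 \<Longrightarrow> P1"
    unfolding P1_def P2_def by (metis ip_eq_scaled_if_ip_norm_eq_scaled zero_less_power)
  moreover have "P1 \<Longrightarrow> P3"
    unfolding P1_def P3_def by (metis ip_angle_eq_if_ip_eq_scaled)
  moreover have "P3 \<Longrightarrow> P4"
    unfolding P3_def P4_def by simp
  moreover have "P4 \<Longrightarrow> P6"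
    unfolding P4_def P6_def by (intro exI[of _ "pi / 2"]) simp
  moreover have "P6 \<Longrightarrow> P1"
    unfolding P6_def using P1_if_Re_orth Re_ip2_eq_0_if_angle_preserved by blast
  moreover have "P1 \<Longrightarrow> P5"
    unfolding P1_def P5_def by auto
  moreover have "P5 \<Longrightarrow> P1"
    unfolding P5_def using P1_if_Re_orth Re_ip2_eq_0_if_ip_orthogonality_preserved by blast
  ultimately show ?thesis
    by blast
qed

end
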